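(* Let $Q$ and $W$ satisfy the standing assumptions with $W=Y$, let $l\ge1$, and let $\mathcal R=\{(\zeta,\hat y)\in\hat X^{I^l_l}\times\hat X^{l\triangledown}:\zeta\in\hat y\}$. Then (i) $\mathcal R$ is a simulation relation from $\hat Q^{I^l_l}$ to $\hat Q^{l\triangledown}$ w.r.t. $Y$ if and only if $Q$ is domino consistent (for this $l$); and (ii) $\mathcal R^{-1}$ is a simulation relation from $\hat Q^{l\triangledown}$ to $\hat Q^{I^l_l}$ w.r.t. $Y$ if and only if $Q$ is future unique w.r.t. $I^l_l$.
   Context: Strings and signals: $\diamond$ is a symbol not in any other set considered. For a set $A$ and $l\in\mathbb N_0$, $A^l$ is the set of strings of length $l$ over $A$, indexed $\zeta=\zeta(0)\cdots\zeta(l-1)$; $\lambda$ is the empty string and $\cdot$ denotes concatenation. For a map $w$ on $\mathbb Z$ (or a string) and integers $t_1\le t_2$, $w|_{[t_1,t_2]}=w(t_1)\cdots w(t_2)$ is the string of length $t_2-t_1+1$ (absolute time forgotten); if $t_2<t_1$ it is $\lambda$. For a set $\mathcal S$ of such maps or strings, $\mathcal S|_{[t_1,t_2]}=\{s|_{[t_1,t_2]}:s\in\mathcal S\}$. State machines: a state machine is $Q=(X,U,Y,\delta,X_0)$ with $X_0\subseteq X$, $\delta\subseteq X\times U\times Y\times X$. Let $H_\delta(x)=\{y:\exists u,x'.\,(x,u,y,x')\in\delta\}$, $F_\delta(x,u)=\{x':\exists y\in H_\delta(x).\,(x,u,y,x')\in\delta\}$. The full behavior $\mathcal B_f(Q)$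 is the set of $(\mu,\nu,\xi)\in(U\times Y\times X)^{\mathbb N_0}$ with $\xi(0)\in X_0$ and $(\xi(k),\mu(k),\nu(k),\xi(k+1))\in\delta$ for all $k\in\mathbb N_0$. $Q$ is live and reachable if every $x\in X_0$ is $\xi(0)$ for some $(\mu,\nu,\xi)\in\mathcal B_f(Q)$ and every $x\in X$ is $\xi(k)$ for some such trajectory and some $k$. Standing assumptions: $Q=(X,U,Y,\delta,X_0)$ is live and reachable and satisfies $(x,u,y,x')\in\delta\iff(x'\in F_\delta(x,u)\wedge y\in H_\delta(x))$ for all $x,x'\in X,u\in U,y\in Y$; the external signal space $W$ is finite and either $W=U\times Y$ or $W=Y$ (here $W=Y$, with $\pi_W(u,y)=\pi_Y(u,y)=y$). Behaviors: $\mathcal B(Q)$ is the set of $w:\mathbb Z\to Y\cup\{\diamond\}$ such that for some $(\mu,\nu,\xi)\in\mathcal B_f(Q)$, $w(k)=\diamond$ for $k<0$ and $w(k)=\nu(k)$ for $k\ge0$. $\mathcal B_S(Q)$ is the set of pairs $(w,\xi)$ of maps on $\mathbb Z$ with $w(k)=\xi(k)=\diamond$ for $k<0$ and $(w(k),\xi(k))=(\nu(k),\xi'(k))$ for $k\ge0$, for some $(\mu,\nu,\xi')\in\mathcal B_f(Q)$. For a set $\mathcal B$ of maps on $\mathbb Z$, $\Pi_l(\mathcal B)=\bigcup_{k\in\mathbb N_0}\mathcal B|_{[k-l+1,k]}$. Corresponding strings: for integers $a,b$ and $x\in X$, $E^{[a,b]}(x)=\{\zeta:\exists(w,\xi)\in\mathcal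 B_S(Q),k\in\mathbb N_0:\ \xi(k)=x,\ \zeta=w|_{[k+a,k+b]}\}$. For $l,m\in\mathbb N_0$ with $m\le l$, $I^l_m=[m-l,m-1]$; in particular $I^l_l=[0,l-1]$. Future uniqueness: $Q$ is future unique w.r.t. $I^l_m$ if for all $x\in X$ and $\zeta,\zeta'\in E^{I^l_m}(x)$, $\zeta|_{[l-m,l-1]}=\zeta'|_{[l-m,l-1]}$. Abstract state machine: $\hat Q^{I^l_m}=(\hat X^{I^l_m},U,Y,\hat\delta^{I^l_m},\hat X^{I^l_m}_0)$ with $\hat X^{I^l_m}=\bigcup_{x\in X}E^{I^l_m}(x)$, $\hat X^{I^l_m}_0=\bigcup_{x\in X_0}E^{I^l_m}(x)$, and $(\hat x,u,y,\hat x')\in\hat\delta^{I^l_m}$ iff (1) $\hat x'|_{[0,l-m-1]}=(\hat x|_{[0,l-m-1]}\cdot\pi_W(u,y))|_{[1,l-m]}$, (2) $\hat x|_{[l-m,l-1]}=(\pi_W(u,y)\cdot\hat x'|_{[l-m,l-2]})|_{[0,m-1]}$, and (3) there are $x,x'\in X$ with $\hat x\in E^{I^l_m}(x)$, $\hat x'\in E^{I^l_m}(x')$, $(x,u,y,x')\in\delta$. Quotient state machine (for $W=Y$): $\hat Q^{l\triangledown}=(\hat X^{l\triangledown},U,Y,\hat\delta^{l\triangledown},\hat X^{l\triangledown}_0)$ with $\hat X^{l\triangledown}=\{E^{I^l_l}(x):x\in X\}$ (a set of subsets of $Y^l$), $\hat X^{l\triangledown}_0=\{E^{I^l_l}(x):x\in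 X_0\}$, and $(\hat x,u,y,\hat x')\in\hat\delta^{l\triangledown}$ iff there exist $x,x'\in X$ with $\hat x=E^{I^l_l}(x)$, $\hat x'=E^{I^l_l}(x')$ and $(x,u,y,x')\in\delta$. Domino consistency (for $W=Y$): $Q$ is domino consistent if for all $\zeta\in\Pi_{l+1}(\mathcal B(Q))$ and all $\hat y\in\hat X^{l\triangledown}$ with $\zeta|_{[0,l-1]}\in\hat y$ there exists $x\in X$ with $E^{I^l_l}(x)=\hat y$ and $\zeta\in E^{[0,l]}(x)$. Simulation relations: for state machines $Q_i=(X_i,U,Y,\delta_i,X_{0,i})$, $i=1,2$, and $V\in\{U\times Y,Y\}$, a relation $\mathcal R\subseteq X_1\times X_2$ is a simulation relation from $Q_1$ to $Q_2$ w.r.t. $V$ if (a) for every $x_1\in X_{0,1}$ there is $x_2\in X_{0,2}$ with $(x_1,x_2)\in\mathcal R$, and (b) for all $(x_1,x_2)\in\mathcal R$ and $(x_1,u_1,y_1,x_1')\in\delta_1$ there exist $u_2,y_2,x_2'$ with $(x_2,u_2,y_2,x_2')\in\delta_2$, $(x_1',x_2')\in\mathcal R$ and $\pi_V(u_1,y_1)=\pi_V(u_2,y_2)$. $\mathcal R^{-1}=\{(x_2,x_1):(x_1,x_2)\in\mathcal R\}$. *)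

theory Defs
  imports Main
begin

(* Signals: maps int => 'y option, where None plays the role of the symbol diamond.
   Strings: lists, indexed from 0. *)

definition sig_restr :: "(int \<Rightarrow> 'a) \<Rightarrow> int \<Rightarrow> int \<Rightarrow> 'a list" where
  "sig_restr w t1 t2 = map (\<lambda>i. w (t1 + int i)) [0..<nat (t2 - t1 + 1)]"

(* restriction of a string zeta|_[t1,t2]; only used with 0 <= t1 *)
definition str_restr :: "'a list \<Rightarrow> int \<Rightarrow> int \<Rightarrow> 'a list" where
  "str_restr zs t1 t2 = take (nat (t2 - t1 + 1)) (drop (nat t1) zs)"

definition state_machine ::
  "'x set \<Rightarrow> 'u set \<Rightarrow> 'y set \<Rightarrow> ('x \<times> 'u \<times> 'y \<times> 'x) set \<Rightarrow> 'x set \<Rightarrow> bool" where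
  "state_machine X U Y \<delta> X0 \<longleftrightarrow> X0 \<subseteq> X \<and> \<delta> \<subseteq> X \<times> U \<times> Y \<times> X"

definition H_delta :: "('x \<times> 'u \<times> 'y \<times> 'x) set \<Rightarrow> 'x \<Rightarrow> 'y set" where
  "H_delta \<delta> x = {y. \<exists>u x'. (x, u, y, x') \<in> \<delta>}"

definition F_delta :: "('x \<times> 'u \<times> 'y \<times> 'x) set \<Rightarrow> 'x \<Rightarrow> 'u \<Rightarrow> 'x set" where
  "F_delta \<delta> x u = {x'. \<exists>y \<in> H_delta \<delta> x. (x, u, y, x') \<in> \<delta>}"

definition full_behavior ::
  "'x set \<Rightarrow> 'u set \<Rightarrow> 'y set \<Rightarrow> ('x \<times> 'u \<times> 'y \<times> 'x) set \<Rightarrow> 'x set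
   \<Rightarrow> ((nat \<Rightarrow> 'u) \<times> (nat \<Rightarrow> 'y) \<times> (nat \<Rightarrow> 'x)) set" where
  "full_behavior X U Y \<delta> X0 = {(\<mu>, \<nu>, \<xi>).
     (\<forall>k. \<mu> k \<in> U \<and> \<nu> k \<in> Y \<and> \<xi> k \<in> X) \<and> \<xi> 0 \<in> X0 \<and>
     (\<forall>k. (\<xi> k, \<mu> k, \<nu> k, \<xi> (Suc k)) \<in> \<delta>)}"

definition live_reachable ::
  "'x set \<Rightarrow> 'u set \<Rightarrow> 'y set \<Rightarrow> ('x \<times> 'u \<times> 'y \<times> 'x) set \<Rightarrow> 'x set \<Rightarrow> bool" where
  "live_reachable X U Y \<delta> X0 \<longleftrightarrow>
     (\<forall>x \<in> X0. \<exists>(\<mu>, \<nu>, \<xi>) \<in> full_behavior X U Y \<delta> X0. \<xi> 0 = x) \<and>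
     (\<forall>x \<in> X. \<exists>(\<mu>, \<nu>, \<xi>) \<in> full_behavior X U Y \<delta> X0. \<exists>k. \<xi> k = x)"

definition standing_assumptions_Y ::
  "'x set \<Rightarrow> 'u set \<Rightarrow> 'y set \<Rightarrow> ('x \<times> 'u \<times> 'y \<times> 'x) set \<Rightarrow> 'x set \<Rightarrow> bool" where
  "standing_assumptions_Y X U Y \<delta> X0 \<longleftrightarrow>
     state_machine X U Y \<delta> X0 \<and> live_reachable X U Y \<delta> X0 \<and>
     (\<forall>x \<in> X. \<forall>u \<in> U. \<forall>y \<in> Y. \<forall>x' \<in> X.
        (x, u, y, x') \<in> \<delta> \<longleftrightarrow> (x' \<in> F_delta \<delta> x u \<and> y \<in> H_delta \<delta> x)) \<and>
     finite Y"

definition behavior ::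
  "'x set \<Rightarrow> 'u set \<Rightarrow> 'y set \<Rightarrow> ('x \<times> 'u \<times> 'y \<times> 'x) set \<Rightarrow> 'x set
   \<Rightarrow> (int \<Rightarrow> 'y option) set" where
  "behavior X U Y \<delta> X0 = {w. \<exists>(\<mu>, \<nu>, \<xi>) \<in> full_behavior X U Y \<delta> X0.
      \<forall>k::int. w k = (if k < 0 then None else Some (\<nu> (nat k)))}"

definition state_behavior ::
  "'x set \<Rightarrow> 'u set \<Rightarrow> 'y set \<Rightarrow> ('x \<times> 'u \<times> 'y \<times> 'x) set \<Rightarrow> 'x set
   \<Rightarrow> ((int \<Rightarrow> 'y option) \<times> (int \<Rightarrow> 'x option)) set" where
  "state_behavior X U Y \<delta> X0 = {(w, \<xi>). \<exists>(\<mu>, \<nu>, \<xi>') \<in> full_behavior X U Y \<delta> X0.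
      \<forall>k::int. w k = (if k < 0 then None else Some (\<nu> (nat k))) \<and>
               \<xi> k = (if k < 0 then None else Some (\<xi>' (nat k)))}"

definition Pi_l :: "nat \<Rightarrow> (int \<Rightarrow> 'a) set \<Rightarrow> 'a list set" where
  "Pi_l l B = (\<Union>k::nat. (\<lambda>w. sig_restr w (int k - int l + 1) (int k)) ` B)"

definition E_str ::
  "'x set \<Rightarrow> 'u set \<Rightarrow> 'y set \<Rightarrow> ('x \<times> 'u \<times> 'y \<times> 'x) set \<Rightarrow> 'x set
   \<Rightarrow> int \<Rightarrow> int \<Rightarrow> 'x \<Rightarrow> 'y option list set" where
  "E_str X U Y \<delta> X0 a b x = {\<zeta>. \<exists>(w, \<xi>) \<in> state_behavior X U Y \<delta> X0. \<exists>k::nat.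
      \<xi> (int k) = Some x \<and> \<zeta> = sig_restr w (int k + a) (int k + b)}"

definition E_I ::
  "'x set \<Rightarrow> 'u set \<Rightarrow> 'y set \<Rightarrow> ('x \<times> 'u \<times> 'y \<times> 'x) set \<Rightarrow> 'x set
   \<Rightarrow> nat \<Rightarrow> nat \<Rightarrow> 'x \<Rightarrow> 'y option list set" where
  "E_I X U Y \<delta> X0 l m x = E_str X U Y \<delta> X0 (int m - int l) (int m - 1) x"

definition future_unique ::
  "'x set \<Rightarrow> 'u set \<Rightarrow> 'y set \<Rightarrow> ('x \<times> 'u \<times> 'y \<times> 'x) set \<Rightarrow> 'x set
   \<Rightarrow> nat \<Rightarrow> nat \<Rightarrow> bool" where
  "future_unique X U Y \<delta> X0 l m \<longleftrightarrow>
     (\<forall>x \<in> X. \<forall>\<zeta> \<in> E_I X U Y \<delta> X0 l m x. \<forall>\<zeta>' \<in> E_I X U Y \<delta> X0 l m x.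
        str_restr \<zeta> (int l - int m) (int l - 1) = str_restr \<zeta>' (int l - int m) (int l - 1))"

(* abstract state machine hat Q^{I^l_m}, W = Y, pi_W(u,y) = y *)
definition absX ::
  "'x set \<Rightarrow> 'u set \<Rightarrow> 'y set \<Rightarrow> ('x \<times> 'u \<times> 'y \<times> 'x) set \<Rightarrow> 'x set
   \<Rightarrow> nat \<Rightarrow> nat \<Rightarrow> 'y option list set" where
  "absX X U Y \<delta> X0 l m = (\<Union>x \<in> X. E_I X U Y \<delta> X0 l m x)"

definition absX0 ::
  "'x set \<Rightarrow> 'u set \<Rightarrow> 'y set \<Rightarrow> ('x \<times> 'u \<times> 'y \<times> 'x) set \<Rightarrow> 'x set
   \<Rightarrow> nat \<Rightarrow> nat \<Rightarrow> 'y option list set" where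
  "absX0 X U Y \<delta> X0 l m = (\<Union>x \<in> X0. E_I X U Y \<delta> X0 l m x)"

definition abs_delta ::
  "'x set \<Rightarrow> 'u set \<Rightarrow> 'y set \<Rightarrow> ('x \<times> 'u \<times> 'y \<times> 'x) set \<Rightarrow> 'x set
   \<Rightarrow> nat \<Rightarrow> nat \<Rightarrow> ('y option list \<times> 'u \<times> 'y \<times> 'y option list) set" where
  "abs_delta X U Y \<delta> X0 l m = {(xh, u, y, xh').
     str_restr xh' 0 (int l - int m - 1)
       = str_restr (str_restr xh 0 (int l - int m - 1) @ [Some y]) 1 (int l - int m) \<and>
     str_restr xh (int l - int m) (int l - 1)
       = str_restr ([Some y] @ str_restr xh' (int l - int m) (int l - 2)) 0 (int m - 1) \<and>
     (\<exists>x x'. xh \<in> E_I X U Y \<delta> X0 l m x \<and> xh' \<in> E_I X U Y \<delta> X0 l m x' \<and>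
             (x, u, y, x') \<in> \<delta>)}"

(* quotient state machine hat Q^{l triangledown}, W = Y *)
definition quotX ::
  "'x set \<Rightarrow> 'u set \<Rightarrow> 'y set \<Rightarrow> ('x \<times> 'u \<times> 'y \<times> 'x) set \<Rightarrow> 'x set
   \<Rightarrow> nat \<Rightarrow> 'y option list set set" where
  "quotX X U Y \<delta> X0 l = {E_I X U Y \<delta> X0 l l x | x. x \<in> X}"

definition quotX0 ::
  "'x set \<Rightarrow> 'u set \<Rightarrow> 'y set \<Rightarrow> ('x \<times> 'u \<times> 'y \<times> 'x) set \<Rightarrow> 'x set
   \<Rightarrow> nat \<Rightarrow> 'y option list set set" where
  "quotX0 X U Y \<delta> X0 l = {E_I X U Y \<delta> X0 l l x | x. x \<in> X0}"

definition quot_delta ::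
  "'x set \<Rightarrow> 'u set \<Rightarrow> 'y set \<Rightarrow> ('x \<times> 'u \<times> 'y \<times> 'x) set \<Rightarrow> 'x set
   \<Rightarrow> nat \<Rightarrow> ('y option list set \<times> 'u \<times> 'y \<times> 'y option list set) set" where
  "quot_delta X U Y \<delta> X0 l = {(yh, u, y, yh'). \<exists>x \<in> X. \<exists>x' \<in> X.
     yh = E_I X U Y \<delta> X0 l l x \<and> yh' = E_I X U Y \<delta> X0 l l x' \<and> (x, u, y, x') \<in> \<delta>}"

definition domino_consistent ::
  "'x set \<Rightarrow> 'u set \<Rightarrow> 'y set \<Rightarrow> ('x \<times> 'u \<times> 'y \<times> 'x) set \<Rightarrow> 'x set \<Rightarrow> nat \<Rightarrow> bool" where
  "domino_consistent X U Y \<delta> X0 l \<longleftrightarrow>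
     (\<forall>\<zeta> \<in> Pi_l (Suc l) (behavior X U Y \<delta> X0). \<forall>yh \<in> quotX X U Y \<delta> X0 l.
        str_restr \<zeta> 0 (int l - 1) \<in> yh \<longrightarrow>
        (\<exists>x \<in> X. E_I X U Y \<delta> X0 l l x = yh \<and> \<zeta> \<in> E_str X U Y \<delta> X0 0 (int l) x))"

definition sim_rel ::
  "('a \<times> 'b) set \<Rightarrow> 'a set \<Rightarrow> ('a \<times> 'u \<times> 'y \<times> 'a) set
   \<Rightarrow> 'b set \<Rightarrow> ('b \<times> 'u \<times> 'y \<times> 'b) set \<Rightarrow> ('u \<times> 'y \<Rightarrow> 'v) \<Rightarrow> bool" where
  "sim_rel R X01 \<delta>1 X02 \<delta>2 piV \<longleftrightarrow>
     (\<forall>x1 \<in> X01. \<exists>x2 \<in> X02. (x1, x2) \<in> R) \<and>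
     (\<forall>(x1, x2) \<in> R. \<forall>u1 y1 x1'. (x1, u1, y1, x1') \<in> \<delta>1 \<longrightarrow>
        (\<exists>u2 y2 x2'. (x2, u2, y2, x2') \<in> \<delta>2 \<and> (x1', x2') \<in> R \<and>
                     piV (u1, y1) = piV (u2, y2)))"

definition pi_Y :: "'u \<times> 'y \<Rightarrow> 'y" where
  "pi_Y p = snd p"

end

theory Submission imports Defs begin

text \<open>A window in \<open>E(x)\<close> is a string of \<open>l\<close> outputs that some trajectory produces from \<open>x\<close>
  on, and a transition \<open>\<zeta> \<rightarrow> \<zeta>'\<close> of the abstract machine shifts a window of length \<open>l + 1\<close>
  from its first \<open>l\<close> to its last \<open>l\<close> letters; conversely every transition \<open>(x, u, y, x')\<close>
  followed by a window from \<open>x'\<close> is such a window from \<open>x\<close>, because trajectories can be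
  spliced at a common state. Simulating the abstract machine by the quotient asks that a
  window of length \<open>l + 1\<close> whose head lies in the class \<open>E(x)\<close> be realised from some state
  of that class, which is domino consistency. Simulating the quotient by the abstract machine
  forces, letter by letter, every window of \<open>E(x)\<close> to coincide with the outputs of any
  trajectory through \<open>x\<close>, which is future uniqueness; conversely, if \<open>E(x)\<close> is a singleton,
  its window can be shifted along every transition out of \<open>x\<close>.\<close>

definition out_window :: "(nat \<Rightarrow> 'y) \<Rightarrow> nat \<Rightarrow> nat \<Rightarrow> 'y option list" where
  "out_window \<nu> k n = map (\<lambda>i. Some (\<nu> (k + i))) [0..<n]"

lemma length_out_window [simp]: "length (out_window \<nu> k n) = n"
  by (simp add: out_window_def)

lemma nth_out_window [simp]: "i < n \<Longrightarrow> out_window \<nu> k n ! i = Some (\<nu> (k + i))"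
  by (simp add: out_window_def)

lemma out_window_Suc: "out_window \<nu> k (Suc n) = Some (\<nu> k) # out_window \<nu> (Suc k) n"
  by (rule nth_equalityI) (auto simp: nth_Cons split: nat.splits)

lemma take_out_window [simp]: "take m (out_window \<nu> k n) = out_window \<nu> k (min m n)"
  by (rule nth_equalityI) auto

lemma sig_restr_out_window:
  assumes "\<forall>k::int. w k = (if k < 0 then None else Some (\<nu> (nat k)))"
  shows "sig_restr w (int k) (int k + b) = out_window \<nu> k (nat (b + 1))"
  using assms by (auto simp: sig_restr_def out_window_def nat_add_distrib)

lemma full_behaviorD:
  assumes "(\<mu>, \<nu>, \<xi>) \<in> full_behavior X U Y \<delta> X0"
  shows "\<xi> k \<in> X" "(\<xi> k, \<mu> k, \<nu> k, \<xi> (Suc k)) \<in> \<delta>"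
  using assms unfolding full_behavior_def by auto

lemma mem_E_str_0_iff:
  "\<zeta> \<in> E_str X U Y \<delta> X0 0 b x \<longleftrightarrow>
   (\<exists>\<mu> \<nu> \<xi> k. (\<mu>, \<nu>, \<xi>) \<in> full_behavior X U Y \<delta> X0 \<and> \<xi> k = x \<and>
      \<zeta> = out_window \<nu> k (nat (b + 1)))"
proof
  assume "\<zeta> \<in> E_str X U Y \<delta> X0 0 b x"
  then obtain w \<xi> k \<mu> \<nu> \<xi>' where fb: "(\<mu>, \<nu>, \<xi>') \<in> full_behavior X U Y \<delta> X0"
    and sig: "\<forall>k::int. w k = (if k < 0 then None else Some (\<nu> (nat k))) \<and>
               \<xi> k = (if k < 0 then None else Some (\<xi>' (nat k)))"
    and "\<xi> (int k) = Some x" and "\<zeta> = sig_restr w (int k + 0) (int k + b)"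
    unfolding E_str_def state_behavior_def by blast
  moreover have "sig_restr w (int k) (int k + b) = out_window \<nu> k (nat (b + 1))"
    using sig by (intro sig_restr_out_window) simp
  ultimately show "\<exists>\<mu> \<nu> \<xi> k. (\<mu>, \<nu>, \<xi>) \<in> full_behavior X U Y \<delta> X0 \<and> \<xi> k = x \<and>
      \<zeta> = out_window \<nu> k (nat (b + 1))"
    by auto
next
  assume "\<exists>\<mu> \<nu> \<xi> k. (\<mu>, \<nu>, \<xi>) \<in> full_behavior X U Y \<delta> X0 \<and> \<xi> k = x \<and>
      \<zeta> = out_window \<nu> k (nat (b + 1))"
  then obtain \<mu> \<nu> \<xi> k where fb: "(\<mu>, \<nu>, \<xi>) \<in> full_behavior X U Y \<delta> X0"
    and "\<xi> k = x" and \<zeta>: "\<zeta> = out_window \<nu> k (nat (b + 1))"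
    by blast
  define w where "w = (\<lambda>k::int. if k < 0 then None else Some (\<nu> (nat k)))"
  define \<xi>w where "\<xi>w = (\<lambda>k::int. if k < 0 then None else Some (\<xi> (nat k)))"
  have "(w, \<xi>w) \<in> state_behavior X U Y \<delta> X0"
    unfolding state_behavior_def w_def \<xi>w_def using fb by blast
  moreover have "\<xi>w (int k) = Some x"
    using \<open>\<xi> k = x\<close> by (simp add: \<xi>w_def)
  moreover have "\<zeta> = sig_restr w (int k + 0) (int k + b)"
    using \<zeta> sig_restr_out_window[of w \<nu> k b] by (simp add: w_def)
  ultimately show "\<zeta> \<in> E_str X U Y \<delta> X0 0 b x"
    unfolding E_str_def by blast
qed

lemma mem_E_I_iff:
  "\<zeta> \<in> E_I X U Y \<delta> X0 l l x \<longleftrightarrow>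
   (\<exists>\<mu> \<nu> \<xi> k. (\<mu>, \<nu>, \<xi>) \<in> full_behavior X U Y \<delta> X0 \<and> \<xi> k = x \<and> \<zeta> = out_window \<nu> k l)"
  unfolding E_I_def by (simp add: mem_E_str_0_iff)

lemma length_E_I: "\<zeta> \<in> E_I X U Y \<delta> X0 l l x \<Longrightarrow> length \<zeta> = l"
  by (auto simp: mem_E_I_iff)

lemma mem_E_str_0_int_iff:
  "\<zeta> \<in> E_str X U Y \<delta> X0 0 (int l) x \<longleftrightarrow>
   (\<exists>\<mu> \<nu> \<xi> k. (\<mu>, \<nu>, \<xi>) \<in> full_behavior X U Y \<delta> X0 \<and> \<xi> k = x \<and>
      \<zeta> = out_window \<nu> k (Suc l))"
  by (simp add: mem_E_str_0_iff nat_add_distrib)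

lemma out_window_mem_Pi_l:
  assumes "(\<mu>, \<nu>, \<xi>) \<in> full_behavior X U Y \<delta> X0"
  shows "out_window \<nu> j (Suc l) \<in> Pi_l (Suc l) (behavior X U Y \<delta> X0)"
proof -
  define w where "w = (\<lambda>k::int. if k < 0 then None else Some (\<nu> (nat k)))"
  have "w \<in> behavior X U Y \<delta> X0"
    unfolding behavior_def w_def using assms by blast
  moreover have "out_window \<nu> j (Suc l) = sig_restr w (int (j + l) - int (Suc l) + 1) (int (j + l))"
    using sig_restr_out_window[of w \<nu> j "int l"] by (simp add: w_def nat_add_distrib)
  ultimately show ?thesis
    unfolding Pi_l_def by blast
qed

lemma Pi_l_Suc_memE:
  assumes "\<zeta> \<in> Pi_l (Suc l) (behavior X U Y \<delta> X0)" and "\<zeta> ! 0 \<noteq> None"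
  obtains \<mu> \<nu> \<xi> j where "(\<mu>, \<nu>, \<xi>) \<in> full_behavior X U Y \<delta> X0" "\<zeta> = out_window \<nu> j (Suc l)"
proof -
  obtain k w where w: "w \<in> behavior X U Y \<delta> X0"
    and \<zeta>: "\<zeta> = sig_restr w (int k - int (Suc l) + 1) (int k)"
    using assms(1) unfolding Pi_l_def by blast
  obtain \<mu> \<nu> \<xi> where fb: "(\<mu>, \<nu>, \<xi>) \<in> full_behavior X U Y \<delta> X0"
    and sig: "\<forall>k::int. w k = (if k < 0 then None else Some (\<nu> (nat k)))"
    using w unfolding behavior_def by blast
  have "\<zeta> ! 0 = w (int k - int l)"
    using \<zeta> by (simp add: sig_restr_def)
  with assms(2) sig have "l \<le> k"
    by (cases "l \<le> k") auto
  then have "\<zeta> = sig_restr w (int (k - l)) (int (k - l) + int l)"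
    using \<zeta> by (simp add: of_nat_diff)
  also have "\<dots> = out_window \<nu> (k - l) (Suc l)"
    using sig_restr_out_window[OF sig] by (simp add: nat_add_distrib)
  finally show thesis
    using fb that by blast
qed

lemma full_behavior_splice:
  assumes "state_machine X U Y \<delta> X0"
    and A: "(\<mu>A, \<nu>A, \<xi>A) \<in> full_behavior X U Y \<delta> X0" "\<xi>A k1 = x"
    and step: "(x, u, y, x') \<in> \<delta>"
    and B: "(\<mu>B, \<nu>B, \<xi>B) \<in> full_behavior X U Y \<delta> X0" "\<xi>B k2 = x'"
  obtains \<mu> \<nu> \<xi> where "(\<mu>, \<nu>, \<xi>) \<in> full_behavior X U Y \<delta> X0" "\<xi> k1 = x"
    "\<And>n. out_window \<nu> k1 (Suc n) = Some y # out_window \<nu>B k2 n"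
proof -
  define \<mu> where "\<mu> = (\<lambda>n. if n < k1 then \<mu>A n else if n = k1 then u else \<mu>B (k2 + n - Suc k1))"
  define \<nu> where "\<nu> = (\<lambda>n. if n < k1 then \<nu>A n else if n = k1 then y else \<nu>B (k2 + n - Suc k1))"
  define \<xi> where "\<xi> = (\<lambda>n. if n \<le> k1 then \<xi>A n else \<xi>B (k2 + n - Suc k1))"
  have "u \<in> U" "y \<in> Y"
    using step assms(1) unfolding state_machine_def by auto
  moreover have "(\<xi> k, \<mu> k, \<nu> k, \<xi> (Suc k)) \<in> \<delta>" for k
  proof -
    consider "k < k1" | "k = k1" | "k1 < k"
      by linarith
    then show ?thesis
    proof cases
      case 1
      then show ?thesis using full_behaviorD(2)[OF A(1)] by (simp add: \<mu>_def \<nu>_def \<xi>_def)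
    next
      case 2
      then show ?thesis using step A(2) B(2) by (simp add: \<mu>_def \<nu>_def \<xi>_def)
    next
      case 3
      then have "k2 + Suc k - Suc k1 = Suc (k2 + k - Suc k1)"
        by simp
      with 3 show ?thesis
        using full_behaviorD(2)[OF B(1), of "k2 + k - Suc k1"] by (simp add: \<mu>_def \<nu>_def \<xi>_def)
    qed
  qed
  ultimately have "(\<mu>, \<nu>, \<xi>) \<in> full_behavior X U Y \<delta> X0"
    using A(1) B(1) unfolding full_behavior_def by (auto simp: \<mu>_def \<nu>_def \<xi>_def)
  moreover have "out_window \<nu> k1 (Suc n) = Some y # out_window \<nu>B k2 n" for n
    unfolding out_window_Suc by (rule nth_equalityI) (auto simp: \<nu>_def nth_Cons split: nat.splits)
  moreover have "\<xi> k1 = x"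
    using A(2) by (simp add: \<xi>_def)
  ultimately show thesis
    using that by blast
qed

lemma abs_delta_ll_iff:
  assumes "l \<ge> 1"
  shows "(\<zeta>, u, y, \<zeta>') \<in> abs_delta X U Y \<delta> X0 l l \<longleftrightarrow>
    take l \<zeta> = Some y # take (l - 1) \<zeta>' \<and>
    (\<exists>x x'. \<zeta> \<in> E_I X U Y \<delta> X0 l l x \<and> \<zeta>' \<in> E_I X U Y \<delta> X0 l l x' \<and> (x, u, y, x') \<in> \<delta>)"
proof -
  have "nat (int l - 1 + 1) = l" "nat (int l - 2 + 1) = l - 1"
    using assms by auto
  moreover have "take l (Some y # take (l - 1) \<zeta>') = Some y # take (l - 1) \<zeta>'"
    using assms by (cases l) auto
  ultimately show ?thesis
    unfolding abs_delta_def str_restr_def by simp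
qed

lemma future_unique_ll_iff:
  "future_unique X U Y \<delta> X0 l l \<longleftrightarrow>
   (\<forall>x \<in> X. \<forall>\<zeta> \<in> E_I X U Y \<delta> X0 l l x. \<forall>\<zeta>' \<in> E_I X U Y \<delta> X0 l l x. \<zeta> = \<zeta>')"
proof -
  have "str_restr \<zeta> (int l - int l) (int l - 1) = \<zeta>" if "\<zeta> \<in> E_I X U Y \<delta> X0 l l x" for \<zeta> x
    using length_E_I[OF that] by (simp add: str_restr_def)
  then show ?thesis
    unfolding future_unique_def by auto
qed

lemma sim_relI:
  assumes "\<forall>x1 \<in> X01. \<exists>x2 \<in> X02. (x1, x2) \<in> R"
    and "\<And>x1 x2 u1 y1 x1'. (x1, x2) \<in> R \<Longrightarrow> (x1, u1, y1, x1') \<in> \<delta>1 \<Longrightarrow>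
          \<exists>u2 y2 x2'. (x2, u2, y2, x2') \<in> \<delta>2 \<and> (x1', x2') \<in> R \<and> piV (u1, y1) = piV (u2, y2)"
  shows "sim_rel R X01 \<delta>1 X02 \<delta>2 piV"
  using assms unfolding sim_rel_def by blast

lemma sim_relD:
  assumes "sim_rel R X01 \<delta>1 X02 \<delta>2 piV" "(x1, x2) \<in> R" "(x1, u1, y1, x1') \<in> \<delta>1"
  obtains u2 y2 x2' where "(x2, u2, y2, x2') \<in> \<delta>2" "(x1', x2') \<in> R" "piV (u1, y1) = piV (u2, y2)"
  using assms unfolding sim_rel_def by blast

locale window_abstraction =
  fixes X :: "'x set" and U :: "'u set" and Y :: "'y set"
    and \<delta> :: "('x \<times> 'u \<times> 'y \<times> 'x) set" and X0 :: "'x set" and l :: nat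
  assumes machine: "state_machine X U Y \<delta> X0"
    and live: "live_reachable X U Y \<delta> X0"
    and l_pos: "l \<ge> 1"
begin

abbreviation E :: "'x \<Rightarrow> 'y option list set" where
  "E \<equiv> E_I X U Y \<delta> X0 l l"

definition window_rel :: "('y option list \<times> 'y option list set) set" where
  "window_rel = {(\<zeta>, yh). \<zeta> \<in> absX X U Y \<delta> X0 l l \<and> yh \<in> quotX X U Y \<delta> X0 l \<and> \<zeta> \<in> yh}"

lemma window_rel_iff: "(\<zeta>, yh) \<in> window_rel \<longleftrightarrow> (\<exists>x \<in> X. yh = E x) \<and> \<zeta> \<in> yh"
  unfolding window_rel_def absX_def quotX_def by blast

lemma reachable:
  assumes "x \<in> X"
  obtains \<mu> \<nu> \<xi> k where "(\<mu>, \<nu>, \<xi>) \<in> full_behavior X U Y \<delta> X0" "\<xi> k = x"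
  using live assms unfolding live_reachable_def by fast

lemma Cons_mem_E_str_iff:
  "Some y # \<zeta>' \<in> E_str X U Y \<delta> X0 0 (int l) x \<longleftrightarrow> (\<exists>u x'. (x, u, y, x') \<in> \<delta> \<and> \<zeta>' \<in> E x')"
proof
  assume "Some y # \<zeta>' \<in> E_str X U Y \<delta> X0 0 (int l) x"
  then obtain \<mu> \<nu> \<xi> k where fb: "(\<mu>, \<nu>, \<xi>) \<in> full_behavior X U Y \<delta> X0" and "\<xi> k = x"
    and "Some y # \<zeta>' = out_window \<nu> k (Suc l)"
    by (auto simp: mem_E_str_0_int_iff)
  then have "\<nu> k = y" "\<zeta>' = out_window \<nu> (Suc k) l" "(x, \<mu> k, y, \<xi> (Suc k)) \<in> \<delta>"
    using full_behaviorD(2)[OF fb, of k] by (auto simp: out_window_Suc)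
  then show "\<exists>u x'. (x, u, y, x') \<in> \<delta> \<and> \<zeta>' \<in> E x'"
    unfolding mem_E_I_iff using fb by blast
next
  assume "\<exists>u x'. (x, u, y, x') \<in> \<delta> \<and> \<zeta>' \<in> E x'"
  then obtain u x' \<mu>B \<nu>B \<xi>B k2 where step: "(x, u, y, x') \<in> \<delta>"
    and B: "(\<mu>B, \<nu>B, \<xi>B) \<in> full_behavior X U Y \<delta> X0" "\<xi>B k2 = x'" "\<zeta>' = out_window \<nu>B k2 l"
    by (auto simp: mem_E_I_iff)
  have "x \<in> X"
    using step machine unfolding state_machine_def by auto
  then obtain \<mu>A \<nu>A \<xi>A k1 where A: "(\<mu>A, \<nu>A, \<xi>A) \<in> full_behavior X U Y \<delta> X0" "\<xi>A k1 = x"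
    by (rule reachable)
  obtain \<mu> \<nu> \<xi> where "(\<mu>, \<nu>, \<xi>) \<in> full_behavior X U Y \<delta> X0" "\<xi> k1 = x"
    "out_window \<nu> k1 (Suc l) = Some y # \<zeta>'"
    using full_behavior_splice[OF machine A step B(1,2)] B(3) by metis
  then show "Some y # \<zeta>' \<in> E_str X U Y \<delta> X0 0 (int l) x"
    unfolding mem_E_str_0_int_iff by metis
qed

lemma take_mem_E:
  "\<eta> \<in> E_str X U Y \<delta> X0 0 (int l) x \<Longrightarrow> take l \<eta> \<in> E x"
  by (fastforce simp: mem_E_str_0_int_iff mem_E_I_iff)

lemma E_str_subset_Pi_l:
  "\<eta> \<in> E_str X U Y \<delta> X0 0 (int l) x \<Longrightarrow> \<eta> \<in> Pi_l (Suc l) (behavior X U Y \<delta> X0)"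
  by (auto simp: mem_E_str_0_int_iff intro: out_window_mem_Pi_l)

lemma window_rel_initial:
  "\<forall>\<zeta> \<in> absX0 X U Y \<delta> X0 l l. \<exists>yh \<in> quotX0 X U Y \<delta> X0 l. (\<zeta>, yh) \<in> window_rel"
  using machine unfolding absX0_def quotX0_def window_rel_iff state_machine_def by blast

lemma converse_window_rel_initial:
  "\<forall>yh \<in> quotX0 X U Y \<delta> X0 l. \<exists>\<zeta> \<in> absX0 X U Y \<delta> X0 l l. (yh, \<zeta>) \<in> converse window_rel"
proof
  fix yh assume "yh \<in> quotX0 X U Y \<delta> X0 l"
  then obtain x where x: "x \<in> X0" "yh = E x"
    unfolding quotX0_def by blast
  then obtain \<mu> \<nu> \<xi> where "(\<mu>, \<nu>, \<xi>) \<in> full_behavior X U Y \<delta> X0" "\<xi> 0 = x"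
    using live unfolding live_reachable_def by fast
  then have "out_window \<nu> 0 l \<in> E x"
    unfolding mem_E_I_iff by blast
  then show "\<exists>\<zeta> \<in> absX0 X U Y \<delta> X0 l l. (yh, \<zeta>) \<in> converse window_rel"
    using x machine unfolding absX0_def converse_iff window_rel_iff state_machine_def by blast
qed

lemma domino_consistent_if_sim_rel:
  assumes sim: "sim_rel window_rel (absX0 X U Y \<delta> X0 l l) (abs_delta X U Y \<delta> X0 l l)
                  (quotX0 X U Y \<delta> X0 l) (quot_delta X U Y \<delta> X0 l) pi_Y"
  shows "domino_consistent X U Y \<delta> X0 l"
  unfolding domino_consistent_def
proof (intro ballI impI)
  fix \<eta> yh
  assume \<eta>: "\<eta> \<in> Pi_l (Suc l) (behavior X U Y \<delta> X0)" and "yh \<in> quotX X U Y \<delta> X0 l"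
    and "str_restr \<eta> 0 (int l - 1) \<in> yh"
  then obtain x0 where "x0 \<in> X" "yh = E x0" and head: "take l \<eta> \<in> yh"
    unfolding quotX_def by (auto simp: str_restr_def)
  then obtain \<nu>0 k0 where "take l \<eta> = out_window \<nu>0 k0 l"
    by (auto simp: mem_E_I_iff)
  then have "\<eta> ! 0 = Some (\<nu>0 k0)"
    using l_pos by (metis nth_take nth_out_window add_0_right less_le_trans zero_less_one)
  then have "\<eta> ! 0 \<noteq> None"
    by simp
  with \<eta> obtain \<mu> \<nu> \<xi> j where fb: "(\<mu>, \<nu>, \<xi>) \<in> full_behavior X U Y \<delta> X0"
    and \<eta>_eq: "\<eta> = out_window \<nu> j (Suc l)"
    by (rule Pi_l_Suc_memE)
  define \<zeta> where "\<zeta> = out_window \<nu> j l"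
  define \<zeta>' where "\<zeta>' = out_window \<nu> (Suc j) l"
  have "(\<zeta>, yh) \<in> window_rel"
    using \<open>x0 \<in> X\<close> \<open>yh = E x0\<close> head by (auto simp: window_rel_iff \<zeta>_def \<eta>_eq)
  moreover have "(\<zeta>, \<mu> j, \<nu> j, \<zeta>') \<in> abs_delta X U Y \<delta> X0 l l"
    unfolding abs_delta_ll_iff[OF l_pos]
  proof
    show "take l \<zeta> = Some (\<nu> j) # take (l - 1) \<zeta>'"
      using l_pos by (cases l) (auto simp: \<zeta>_def \<zeta>'_def out_window_Suc[of \<nu> j])
    show "\<exists>x x'. \<zeta> \<in> E x \<and> \<zeta>' \<in> E x' \<and> (x, \<mu> j, \<nu> j, x') \<in> \<delta>"
      unfolding \<zeta>_def \<zeta>'_def mem_E_I_iff using fb full_behaviorD(2)[OF fb] by blast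
  qed
  ultimately obtain u2 y2 yh' where "(yh, u2, y2, yh') \<in> quot_delta X U Y \<delta> X0 l"
    and "(\<zeta>', yh') \<in> window_rel" and "pi_Y (\<mu> j, \<nu> j) = pi_Y (u2, y2)"
    by (rule sim_relD[OF sim])
  then obtain x1 x1' where "x1 \<in> X" "yh = E x1" "(x1, u2, \<nu> j, x1') \<in> \<delta>" "\<zeta>' \<in> E x1'"
    unfolding quot_delta_def window_rel_iff pi_Y_def by auto
  moreover have "\<eta> = Some (\<nu> j) # \<zeta>'"
    by (simp add: \<eta>_eq \<zeta>'_def out_window_Suc)
  ultimately show "\<exists>x \<in> X. E x = yh \<and> \<eta> \<in> E_str X U Y \<delta> X0 0 (int l) x"
    using Cons_mem_E_str_iff by blast
qed

lemma sim_rel_if_domino_consistent: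
  assumes dc: "domino_consistent X U Y \<delta> X0 l"
  shows "sim_rel window_rel (absX0 X U Y \<delta> X0 l l) (abs_delta X U Y \<delta> X0 l l)
           (quotX0 X U Y \<delta> X0 l) (quot_delta X U Y \<delta> X0 l) pi_Y"
proof (rule sim_relI[OF window_rel_initial])
  fix \<zeta> yh u y \<zeta>'
  assume "(\<zeta>, yh) \<in> window_rel" and "(\<zeta>, u, y, \<zeta>') \<in> abs_delta X U Y \<delta> X0 l l"
  then obtain x1 x1' where "yh \<in> quotX X U Y \<delta> X0 l" "\<zeta> \<in> yh"
    and shift: "take l \<zeta> = Some y # take (l - 1) \<zeta>'"
    and "\<zeta> \<in> E x1" "\<zeta>' \<in> E x1'" "(x1, u, y, x1') \<in> \<delta>"
    unfolding abs_delta_ll_iff[OF l_pos] window_rel_def by blast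
  define \<eta> where "\<eta> = Some y # \<zeta>'"
  have \<eta>_E: "\<eta> \<in> E_str X U Y \<delta> X0 0 (int l) x1"
    unfolding \<eta>_def Cons_mem_E_str_iff using \<open>\<zeta>' \<in> E x1'\<close> \<open>(x1, u, y, x1') \<in> \<delta>\<close> by blast
  have "str_restr \<eta> 0 (int l - 1) = take l \<eta>"
    by (simp add: str_restr_def)
  also have "\<dots> = take l \<zeta>"
    using shift l_pos by (cases l) (simp_all add: \<eta>_def)
  also have "\<dots> = \<zeta>"
    using length_E_I[OF \<open>\<zeta> \<in> E x1\<close>] by simp
  finally have "str_restr \<eta> 0 (int l - 1) \<in> yh"
    using \<open>\<zeta> \<in> yh\<close> by simp
  then obtain x where "x \<in> X" "E x = yh" "Some y # \<zeta>' \<in> E_str X U Y \<delta> X0 0 (int l) x"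
    using dc E_str_subset_Pi_l[OF \<eta>_E] \<open>yh \<in> quotX X U Y \<delta> X0 l\<close>
    unfolding domino_consistent_def \<eta>_def by blast
  then obtain u2 x' where "(x, u2, y, x') \<in> \<delta>" "\<zeta>' \<in> E x'"
    unfolding Cons_mem_E_str_iff by blast
  moreover have "x' \<in> X"
    using \<open>(x, u2, y, x') \<in> \<delta>\<close> machine unfolding state_machine_def by auto
  ultimately show "\<exists>u2 y2 yh'. (yh, u2, y2, yh') \<in> quot_delta X U Y \<delta> X0 l \<and>
      (\<zeta>', yh') \<in> window_rel \<and> pi_Y (u, y) = pi_Y (u2, y2)"
    using \<open>x \<in> X\<close> \<open>E x = yh\<close> unfolding quot_delta_def window_rel_iff pi_Y_def by fastforce
qed

lemma converse_sim_rel_step: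
  assumes sim: "sim_rel (converse window_rel) (quotX0 X U Y \<delta> X0 l) (quot_delta X U Y \<delta> X0 l)
                  (absX0 X U Y \<delta> X0 l l) (abs_delta X U Y \<delta> X0 l l) pi_Y"
    and fb: "(\<mu>, \<nu>, \<xi>) \<in> full_behavior X U Y \<delta> X0" and \<zeta>: "\<zeta> \<in> E (\<xi> k)"
  obtains \<zeta>' where "\<zeta>' \<in> E (\<xi> (Suc k))" "take l \<zeta> = Some (\<nu> k) # take (l - 1) \<zeta>'"
proof -
  have "(E (\<xi> k), \<zeta>) \<in> converse window_rel"
    using full_behaviorD(1)[OF fb] \<zeta> by (auto simp: window_rel_iff)
  moreover have "(E (\<xi> k), \<mu> k, \<nu> k, E (\<xi> (Suc k))) \<in> quot_delta X U Y \<delta> X0 l"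
    unfolding quot_delta_def using full_behaviorD(1,2)[OF fb] by blast
  ultimately obtain u2 y2 \<zeta>' where "(\<zeta>, u2, y2, \<zeta>') \<in> abs_delta X U Y \<delta> X0 l l"
    and "(E (\<xi> (Suc k)), \<zeta>') \<in> converse window_rel" and "pi_Y (\<mu> k, \<nu> k) = pi_Y (u2, y2)"
    by (rule sim_relD[OF sim])
  then show thesis
    using that by (auto simp: abs_delta_ll_iff[OF l_pos] window_rel_iff pi_Y_def)
qed

lemma window_eq_out_window_if_converse_sim_rel:
  assumes sim: "sim_rel (converse window_rel) (quotX0 X U Y \<delta> X0 l) (quot_delta X U Y \<delta> X0 l)
                  (absX0 X U Y \<delta> X0 l l) (abs_delta X U Y \<delta> X0 l l) pi_Y"
    and fb: "(\<mu>, \<nu>, \<xi>) \<in> full_behavior X U Y \<delta> X0" and \<zeta>: "\<zeta> \<in> E (\<xi> k)"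
  shows "\<zeta> = out_window \<nu> k l"
proof (rule nth_equalityI)
  show "length \<zeta> = length (out_window \<nu> k l)"
    using length_E_I[OF \<zeta>] by simp
  have "\<zeta> ! i = Some (\<nu> (k + i))" if "i < l" "\<zeta> \<in> E (\<xi> k)" for i k \<zeta>
    using that
  proof (induction i arbitrary: k \<zeta>)
    case 0
    obtain \<zeta>' where "take l \<zeta> = Some (\<nu> k) # take (l - 1) \<zeta>'"
      using converse_sim_rel_step[OF sim fb 0(2)] .
    then have "take l \<zeta> ! 0 = Some (\<nu> k)"
      by simp
    with 0(1) show ?case
      by simp
  next
    case (Suc i)
    obtain \<zeta>' where \<zeta>': "\<zeta>' \<in> E (\<xi> (Suc k))"
      and shift: "take l \<zeta> = Some (\<nu> k) # take (l - 1) \<zeta>'"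
      using converse_sim_rel_step[OF sim fb Suc(3)] .
    have "\<zeta> ! Suc i = take l \<zeta> ! Suc i"
      using Suc(2) by simp
    also have "\<dots> = \<zeta>' ! i"
      using Suc(2) by (simp add: shift)
    also have "\<dots> = Some (\<nu> (k + Suc i))"
      using Suc.IH[OF _ \<zeta>'] Suc(2) by simp
    finally show ?case .
  qed
  then show "\<zeta> ! i = out_window \<nu> k l ! i" if "i < length \<zeta>" for i
    using that \<zeta> length_E_I[OF \<zeta>] by simp
qed

lemma future_unique_if_converse_sim_rel:
  assumes sim: "sim_rel (converse window_rel) (quotX0 X U Y \<delta> X0 l) (quot_delta X U Y \<delta> X0 l)
                  (absX0 X U Y \<delta> X0 l l) (abs_delta X U Y \<delta> X0 l l) pi_Y"
  shows "future_unique X U Y \<delta> X0 l l"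
  unfolding future_unique_ll_iff
proof (intro ballI)
  fix x \<zeta>1 \<zeta>2 assume "x \<in> X" "\<zeta>1 \<in> E x" "\<zeta>2 \<in> E x"
  obtain \<mu> \<nu> \<xi> k where fb: "(\<mu>, \<nu>, \<xi>) \<in> full_behavior X U Y \<delta> X0" and "\<xi> k = x"
    using reachable[OF \<open>x \<in> X\<close>] by blast
  then have "\<zeta>1 = out_window \<nu> k l" "\<zeta>2 = out_window \<nu> k l"
    using window_eq_out_window_if_converse_sim_rel[OF sim fb] \<open>\<zeta>1 \<in> E x\<close> \<open>\<zeta>2 \<in> E x\<close> by auto
  then show "\<zeta>1 = \<zeta>2"
    by simp
qed

lemma converse_sim_rel_if_future_unique:
  assumes fu: "future_unique X U Y \<delta> X0 l l"
  shows "sim_rel (converse window_rel) (quotX0 X U Y \<delta> X0 l) (quot_delta X U Y \<delta> X0 l)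
           (absX0 X U Y \<delta> X0 l l) (abs_delta X U Y \<delta> X0 l l) pi_Y"
proof (rule sim_relI[OF converse_window_rel_initial])
  fix yh \<zeta> u y yh'
  assume "(yh, \<zeta>) \<in> converse window_rel" and "(yh, u, y, yh') \<in> quot_delta X U Y \<delta> X0 l"
  then obtain x x' where "x \<in> X" "x' \<in> X" "yh = E x" "yh' = E x'" "(x, u, y, x') \<in> \<delta>"
    and "\<zeta> \<in> yh"
    unfolding quot_delta_def converse_iff window_rel_iff by blast
  then have "\<zeta> \<in> E x"
    by simp
  obtain \<mu> \<nu> \<xi> k where "(\<mu>, \<nu>, \<xi>) \<in> full_behavior X U Y \<delta> X0" "\<xi> k = x'"
    using \<open>x' \<in> X\<close> by (rule reachable)
  then have \<zeta>': "out_window \<nu> k l \<in> E x'" (is "?\<zeta>' \<in> _")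
    unfolding mem_E_I_iff by blast
  then have "Some y # ?\<zeta>' \<in> E_str X U Y \<delta> X0 0 (int l) x"
    unfolding Cons_mem_E_str_iff using \<open>(x, u, y, x') \<in> \<delta>\<close> by blast
  then have "take l (Some y # ?\<zeta>') \<in> E x"
    by (rule take_mem_E)
  then have "\<zeta> = take l (Some y # ?\<zeta>')"
    using fu \<open>x \<in> X\<close> \<open>\<zeta> \<in> E x\<close> unfolding future_unique_ll_iff by blast
  then have "take l \<zeta> = Some y # take (l - 1) ?\<zeta>'"
    using l_pos by (cases l) auto
  then have "(\<zeta>, u, y, ?\<zeta>') \<in> abs_delta X U Y \<delta> X0 l l"
    unfolding abs_delta_ll_iff[OF l_pos] using \<open>\<zeta> \<in> E x\<close> \<zeta>' \<open>(x, u, y, x') \<in> \<delta>\<close> by blast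
  moreover have "(yh', ?\<zeta>') \<in> converse window_rel"
    using \<open>x' \<in> X\<close> \<open>yh' = E x'\<close> \<zeta>' by (auto simp: window_rel_iff)
  ultimately show "\<exists>u2 y2 \<zeta>''. (\<zeta>, u2, y2, \<zeta>'') \<in> abs_delta X U Y \<delta> X0 l l \<and>
      (yh', \<zeta>'') \<in> converse window_rel \<and> pi_Y (u, y) = pi_Y (u2, y2)"
    by blast
qed

end

theorem theorem9:
  fixes X :: "'x set" and U :: "'u set" and Y :: "'y set"
    and \<delta> :: "('x \<times> 'u \<times> 'y \<times> 'x) set" and X0 :: "'x set" and l :: nat
  assumes "standing_assumptions_Y X U Y \<delta> X0"
    and "l \<ge> 1"
  defines "R \<equiv> {(\<zeta>, yh). \<zeta> \<in> absX X U Y \<delta> X0 l l \<and> yh \<in> quotX X U Y \<delta> X0 l \<and> \<zeta> \<in> yh}"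
  shows "(sim_rel R (absX0 X U Y \<delta> X0 l l) (abs_delta X U Y \<delta> X0 l l)
                    (quotX0 X U Y \<delta> X0 l) (quot_delta X U Y \<delta> X0 l) pi_Y
            \<longleftrightarrow> domino_consistent X U Y \<delta> X0 l)
       \<and> (sim_rel (converse R) (quotX0 X U Y \<delta> X0 l) (quot_delta X U Y \<delta> X0 l)
                    (absX0 X U Y \<delta> X0 l l) (abs_delta X U Y \<delta> X0 l l) pi_Y
            \<longleftrightarrow> future_unique X U Y \<delta> X0 l l)"
proof -
  interpret window_abstraction X U Y \<delta> X0 l
    using assms(1,2) unfolding standing_assumptions_Y_def by unfold_locales auto
  have "R = window_rel"
    by (simp add: R_def window_rel_def)
  then show ?thesis
    using domino_consistent_if_sim_rel sim_rel_if_domino_consistent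
      future_unique_if_converse_sim_rel converse_sim_rel_if_future_unique by blast
qed

end
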